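(* Let $X$ be a Tychonoff space containing clopen subsets $U_n$, $n\in\omega$, such that $U_{n+1}\subset U_n$ for all $n\in\omega$ and $C=\bigcap_{n\in\omega}U_n$ is nonempty and not open. Then there exists a nondiscrete countable Tychonoff space $Y$ such that $F_G(Y)$, $A_G(Y)$, and $B_G(Y)$ are topological quotient groups of $F_G(X)$, $A_G(X)$, and $B_G(X)$, respectively.
   Context: For a Tychonoff space $X$ with a fixed point $x_0$, the Graev free topological group $F_G(X)$ is the unique topological group with identity $x_0$ containing $X$ as a subspace such that every continuous map from $X$ to a topological group $G$ sending $x_0$ to the identity extends to a continuous homomorphism $F_G(X)\to G$ (it does not depend on the choice of $x_0$ up to topological isomorphism). The Graev free Abelian topological group $A_G(X)$ and free Boolean topological group $B_G(X)$ are defined analogously, with the group being Abelian (resp. Boolean, i.e., all elements of order at most $2$) and only maps into Abelian (resp. Boolean) topological groups required to extend. A topological group $H$ is a topological quotient of $G$ if $H$ is topologically isomorphic to $G/N$ with the quotient topology for some closed normal subgroup $N$. *)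

theory Defs
  imports "HOL-Analysis.Analysis" "HOL-Algebra.Coset" "HOL-Algebra.Generated_Groups"
begin

definition tychonoff_space :: "'a topology \<Rightarrow> bool" where
  "tychonoff_space X \<longleftrightarrow> completely_regular_space X \<and> Hausdorff_space X"

definition topological_group :: "'g monoid \<Rightarrow> 'g topology \<Rightarrow> bool" where
  "topological_group G T \<longleftrightarrow> group G \<and> topspace T = carrier G \<and>
     continuous_map (prod_topology T T) T (\<lambda>p. fst p \<otimes>\<^bsub>G\<^esub> snd p) \<and>
     continuous_map T T (\<lambda>x. inv\<^bsub>G\<^esub> x)"

datatype grp_variety = AllGroups | AbelianGroups | BooleanGroups

definition in_variety :: "grp_variety \<Rightarrow> 'g monoid \<Rightarrow> 'g topology \<Rightarrow> bool" where
  "in_variety V G T \<longleftrightarrow> topological_group G T \<and>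
     (case V of AllGroups \<Rightarrow> True
      | AbelianGroups \<Rightarrow> comm_group G
      | BooleanGroups \<Rightarrow> (\<forall>x\<in>carrier G. x \<otimes>\<^bsub>G\<^esub> x = \<one>\<^bsub>G\<^esub>))"

text \<open>The target groups are taken with carrier in the type 'a list; since this type can hold a
  copy of every Graev free group of X, this characterises the Graev free group up to
  topological isomorphism.\<close>
definition graev_free ::
  "grp_variety \<Rightarrow> 'a topology \<Rightarrow> 'a \<Rightarrow> 'g monoid \<Rightarrow> 'g topology \<Rightarrow> ('a \<Rightarrow> 'g) \<Rightarrow> bool" where
  "graev_free V X x0 G T i \<longleftrightarrow>
     in_variety V G T \<and> x0 \<in> topspace X \<and> embedding_map X T i \<and> i x0 = \<one>\<^bsub>G\<^esub> \<and>
     generate G (i ` topspace X) = carrier G \<and>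
     (\<forall>(H :: 'a list monoid) (S :: 'a list topology) f.
        in_variety V H S \<and> continuous_map X S f \<and> f x0 = \<one>\<^bsub>H\<^esub> \<longrightarrow>
        (\<exists>h. h \<in> hom G H \<and> continuous_map T S h \<and> (\<forall>x\<in>topspace X. h (i x) = f x)))"

text \<open>The quotient topology on G/N is
  the one making the projection x \<mapsto> N x a quotient map, so a group isomorphism
  psi : G/N \<rightarrow> H is a homeomorphism iff psi composed with the projection is a quotient map.\<close>
definition topological_quotient :: "'g monoid \<Rightarrow> 'g topology \<Rightarrow> 'h monoid \<Rightarrow> 'h topology \<Rightarrow> bool" where
  "topological_quotient G T H S \<longleftrightarrow>
     (\<exists>N. N \<lhd> G \<and> closedin T N \<and>
        (\<exists>\<psi>. \<psi> \<in> iso (G Mod N) H \<and> quotient_map T S (\<lambda>x. \<psi> (N #>\<^bsub>G\<^esub> x))))"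

end

theory Submission
  imports Defs
begin

text \<open>Let \<open>Y\<close> be the quotient of \<open>X\<close> that collapses \<open>C = \<Inter>n. U n\<close> to the point \<open>0\<close> and
  each clopen piece \<open>(\<Inter>m<k. U m) - U k\<close> to the point \<open>k + 1\<close>. Then \<open>Y\<close> is \<open>T\<^sub>1\<close>, every
  point except \<open>0\<close> is isolated, and \<open>0\<close> is not isolated because \<open>C\<close> is not open; so \<open>Y\<close> is a
  countable non-discrete Tychonoff space.

  The quotient map \<open>q : X \<rightarrow> Y\<close> induces a continuous homomorphism \<open>\<Phi> : F(X) \<rightarrow> F(Y)\<close> onto
  \<open>F(Y)\<close>. Since \<open>\<Phi>\<close> is open onto its quotient topology, that topology is a group topology in
  which \<open>Y\<close> embeds continuously, so by the universal property it is coarser than, hence equal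
  to, the free topology; thus \<open>\<Phi>\<close> is a quotient map. Its kernel is closed because \<open>{1}\<close> is
  closed in \<open>F(Y)\<close>: each \<open>w \<noteq> 1\<close> is fixed by a continuous endomorphism into \<open>F(Y)\<close> with the
  discrete topology.\<close>

section \<open>Quotient topologies\<close>

definition quotient_topology :: "'a topology \<Rightarrow> ('a \<Rightarrow> 'b) \<Rightarrow> 'b topology" where
  "quotient_topology X f =
     topology (\<lambda>W. W \<subseteq> f ` topspace X \<and> openin X {x \<in> topspace X. f x \<in> W})"

lemma openin_quotient_topology:
  "openin (quotient_topology X f) W \<longleftrightarrow>
     W \<subseteq> f ` topspace X \<and> openin X {x \<in> topspace X. f x \<in> W}"
proof -
  have "istopology (\<lambda>W. W \<subseteq> f ` topspace X \<and> openin X {x \<in> topspace X. f x \<in> W})"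
    unfolding istopology_def
  proof (rule conjI; intro allI impI)
    fix S T
    assume "S \<subseteq> f ` topspace X \<and> openin X {x \<in> topspace X. f x \<in> S}"
      and "T \<subseteq> f ` topspace X \<and> openin X {x \<in> topspace X. f x \<in> T}"
    moreover have "{x \<in> topspace X. f x \<in> S \<inter> T} =
        {x \<in> topspace X. f x \<in> S} \<inter> {x \<in> topspace X. f x \<in> T}"
      by auto
    ultimately show "S \<inter> T \<subseteq> f ` topspace X \<and> openin X {x \<in> topspace X. f x \<in> S \<inter> T}"
      by auto
  next
    fix K
    assume "\<forall>W\<in>K. W \<subseteq> f ` topspace X \<and> openin X {x \<in> topspace X. f x \<in> W}"
    moreover have "{x \<in> topspace X. f x \<in> \<Union>K} = (\<Union>W\<in>K. {x \<in> topspace X. f x \<in> W})"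
      by auto
    ultimately show "\<Union>K \<subseteq> f ` topspace X \<and> openin X {x \<in> topspace X. f x \<in> \<Union>K}"
      by auto
  qed
  then show ?thesis
    by (simp add: quotient_topology_def)
qed

lemma topspace_quotient_topology [simp]: "topspace (quotient_topology X f) = f ` topspace X"
proof -
  have "{x \<in> topspace X. f x \<in> f ` topspace X} = topspace X"
    by auto
  then have "openin (quotient_topology X f) (f ` topspace X)"
    by (simp add: openin_quotient_topology)
  moreover have "topspace (quotient_topology X f) \<subseteq> f ` topspace X"
    using openin_topspace[of "quotient_topology X f"] by (simp only: openin_quotient_topology)
  ultimately show ?thesis
    using openin_subset by blast
qed

lemma closedin_quotient_topology:
  "closedin (quotient_topology X f) S \<longleftrightarrow>
     S \<subseteq> f ` topspace X \<and> closedin X {x \<in> topspace X. f x \<in> S}"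
proof -
  have "{x \<in> topspace X. f x \<in> f ` topspace X - S} = topspace X - {x \<in> topspace X. f x \<in> S}"
    by auto
  then show ?thesis
    by (simp add: closedin_def openin_quotient_topology)
qed

lemma quotient_map_quotient_topology: "quotient_map X (quotient_topology X f) f"
  by (auto simp: quotient_map_def openin_quotient_topology)

lemma openin_quotient_topology_fibres:
  assumes "W \<subseteq> f ` topspace X" and "\<And>y. y \<in> W \<Longrightarrow> openin X {x \<in> topspace X. f x = y}"
  shows "openin (quotient_topology X f) W"
proof -
  have "{x \<in> topspace X. f x \<in> W} = (\<Union>y\<in>W. {x \<in> topspace X. f x = y})"
    by auto
  then show ?thesis
    using assms by (auto simp: openin_quotient_topology)
qed

lemma t1_space_quotient_topology:
  assumes "\<And>y. closedin X {x \<in> topspace X. f x = y}"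
  shows "t1_space (quotient_topology X f)"
  using assms by (auto simp: t1_space_closedin_singleton closedin_quotient_topology)

lemma open_map_prod_map:
  assumes f: "open_map X X' f" and g: "open_map Y Y' g"
  shows "open_map (prod_topology X Y) (prod_topology X' Y') (\<lambda>(x, y). (f x, g y))"
  unfolding open_map_def openin_prod_topology_alt
proof (intro allI impI)
  fix W x' y'
  assume W: "\<forall>x y. (x, y) \<in> W \<longrightarrow>
      (\<exists>U V. openin X U \<and> openin Y V \<and> x \<in> U \<and> y \<in> V \<and> U \<times> V \<subseteq> W)"
    and "(x', y') \<in> (\<lambda>(x, y). (f x, g y)) ` W"
  then obtain x y where xy: "(x, y) \<in> W" and x': "x' = f x" and y': "y' = g y"
    by (auto elim: imageE)
  obtain U V where UV: "openin X U \<and> openin Y V \<and> x \<in> U \<and> y \<in> V \<and> U \<times> V \<subseteq> W"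
    using W[rule_format, OF xy] by (elim exE) (rule that)
  show "\<exists>U V. openin X' U \<and> openin Y' V \<and> x' \<in> U \<and> y' \<in> V \<and>
      U \<times> V \<subseteq> (\<lambda>(x, y). (f x, g y)) ` W"
  proof (intro exI conjI)
    show "openin X' (f ` U)" "openin Y' (g ` V)"
      using f g UV by (simp_all add: open_map_def)
    show "x' \<in> f ` U" "y' \<in> g ` V"
      using UV x' y' by simp_all
    show "f ` U \<times> g ` V \<subseteq> (\<lambda>(x, y). (f x, g y)) ` W"
    proof (rule subsetI)
      fix z
      assume "z \<in> f ` U \<times> g ` V"
      then obtain a b where "a \<in> U" "b \<in> V" "z = (f a, g b)"
        by blast
      with UV have "(a, b) \<in> W" and "z = (\<lambda>(x, y). (f x, g y)) (a, b)"
        by auto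
      then show "z \<in> (\<lambda>(x, y). (f x, g y)) ` W"
        by (rule rev_image_eqI)
    qed
  qed
qed

section \<open>Topological groups\<close>

lemma topological_group_right_translation:
  assumes "topological_group G T" and "a \<in> carrier G"
  shows "continuous_map T T (\<lambda>x. x \<otimes>\<^bsub>G\<^esub> a)"
proof -
  have pair: "continuous_map T (prod_topology T T) (\<lambda>x. (x, a))"
    using assms by (intro continuous_map_pairedI) (auto simp: topological_group_def)
  have mult: "continuous_map (prod_topology T T) T (\<lambda>p. fst p \<otimes>\<^bsub>G\<^esub> snd p)"
    using assms(1) by (simp add: topological_group_def)
  show ?thesis
    using continuous_map_compose[OF pair mult] by (simp add: o_def)
qed

lemma openin_right_translation_image:
  fixes G :: "'g monoid" (structure)
  assumes tg: "topological_group G T" and a: "a \<in> carrier G" and W: "openin T W"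
  shows "openin T ((\<lambda>x. x \<otimes>\<^bsub>G\<^esub> a) ` W)"
proof -
  interpret group G
    using tg by (simp add: topological_group_def)
  have carrier: "topspace T = carrier G"
    using tg by (simp add: topological_group_def)
  have "(\<lambda>x. x \<otimes> a) ` W = {y \<in> topspace T. y \<otimes> inv a \<in> W}"
  proof (intro equalityI subsetI)
    fix y
    assume "y \<in> (\<lambda>x. x \<otimes> a) ` W"
    then obtain x where "x \<in> W" "y = x \<otimes> a"
      by blast
    moreover have "x \<in> carrier G"
      using \<open>x \<in> W\<close> openin_subset[OF W] carrier by blast
    ultimately show "y \<in> {y \<in> topspace T. y \<otimes> inv a \<in> W}"
      using a carrier by (simp add: m_assoc)
  next
    fix y
    assume y: "y \<in> {y \<in> topspace T. y \<otimes> inv a \<in> W}"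
    then have "y = (y \<otimes> inv a) \<otimes> a"
      using a carrier by (simp add: m_assoc)
    then show "y \<in> (\<lambda>x. x \<otimes> a) ` W"
      using y by (intro rev_image_eqI[of "y \<otimes> inv a"]) simp_all
  qed
  then show ?thesis
    using openin_continuous_map_preimage[OF topological_group_right_translation[OF tg] W] a
    by simp
qed

lemma open_map_quotient_topology_hom:
  assumes tg: "topological_group G T" and "group H" and \<Phi>: "\<Phi> \<in> hom G H"
  shows "open_map T (quotient_topology T \<Phi>) \<Phi>"
  unfolding open_map_def
proof (intro allI impI)
  fix W
  assume W: "openin T W"
  interpret group_hom G H \<Phi>
    using assms by (simp add: group_hom_def group_hom_axioms_def topological_group_def)
  have carrier: "topspace T = carrier G"
    using tg by (simp add: topological_group_def)
  have W_carrier: "W \<subseteq> carrier G"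
    using openin_subset[OF W] carrier by simp
  have "{x \<in> topspace T. \<Phi> x \<in> \<Phi> ` W} = (\<Union>n\<in>kernel G H \<Phi>. (\<lambda>x. x \<otimes>\<^bsub>G\<^esub> n) ` W)"
  proof (intro equalityI subsetI)
    fix x
    assume "x \<in> {x \<in> topspace T. \<Phi> x \<in> \<Phi> ` W}"
    then obtain w where x: "x \<in> carrier G" and w: "w \<in> W" "\<Phi> x = \<Phi> w"
      using carrier by auto
    have "w \<in> carrier G"
      using w(1) W_carrier by blast
    then have "inv\<^bsub>G\<^esub> w \<otimes>\<^bsub>G\<^esub> x \<in> kernel G H \<Phi>"
      using x w(2) by (simp add: kernel_def)
    moreover have "x = w \<otimes>\<^bsub>G\<^esub> (inv\<^bsub>G\<^esub> w \<otimes>\<^bsub>G\<^esub> x)"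
      using x \<open>w \<in> carrier G\<close> by (simp add: G.m_assoc[symmetric])
    ultimately show "x \<in> (\<Union>n\<in>kernel G H \<Phi>. (\<lambda>x. x \<otimes>\<^bsub>G\<^esub> n) ` W)"
      using w(1) by blast
  next
    fix x
    assume "x \<in> (\<Union>n\<in>kernel G H \<Phi>. (\<lambda>x. x \<otimes>\<^bsub>G\<^esub> n) ` W)"
    then obtain n w where "n \<in> kernel G H \<Phi>" "w \<in> W" "x = w \<otimes>\<^bsub>G\<^esub> n"
      by blast
    then show "x \<in> {x \<in> topspace T. \<Phi> x \<in> \<Phi> ` W}"
      using W_carrier carrier by (auto simp: kernel_def)
  qed
  moreover have "openin T (\<Union>n\<in>kernel G H \<Phi>. (\<lambda>x. x \<otimes>\<^bsub>G\<^esub> n) ` W)"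
    using W by (intro openin_Union) (auto simp: kernel_def intro: openin_right_translation_image[OF tg])
  ultimately show "openin (quotient_topology T \<Phi>) (\<Phi> ` W)"
    using openin_subset[OF W] by (simp add: openin_quotient_topology image_mono)
qed

lemma topological_group_quotient_topology:
  assumes tg: "topological_group G T" and "group H"
    and \<Phi>: "\<Phi> \<in> hom G H" and onto: "\<Phi> ` carrier G = carrier H"
  shows "topological_group H (quotient_topology T \<Phi>)"
proof -
  interpret group_hom G H \<Phi>
    using assms by (simp add: group_hom_def group_hom_axioms_def topological_group_def)
  let ?Q = "quotient_topology T \<Phi>"
  have carrier: "topspace T = carrier G"
    using tg by (simp add: topological_group_def)
  have continuous_\<Phi>: "continuous_map T ?Q \<Phi>"
    by (rule quotient_imp_continuous_map[OF quotient_map_quotient_topology])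
  have open_\<Phi>: "open_map T ?Q \<Phi>"
    by (rule open_map_quotient_topology_hom[OF assms(1-3)])
  have pairs: "quotient_map (prod_topology T T) (prod_topology ?Q ?Q) (\<lambda>(x, y). (\<Phi> x, \<Phi> y))"
  proof (rule continuous_open_imp_quotient_map)
    show "continuous_map (prod_topology T T) (prod_topology ?Q ?Q) (\<lambda>(x, y). (\<Phi> x, \<Phi> y))"
      using continuous_\<Phi> by (simp add: continuous_map_prod_top)
    show "open_map (prod_topology T T) (prod_topology ?Q ?Q) (\<lambda>(x, y). (\<Phi> x, \<Phi> y))"
      by (rule open_map_prod_map[OF open_\<Phi> open_\<Phi>])
    have "(\<lambda>(x, y). (\<Phi> x, \<Phi> y)) ` (carrier G \<times> carrier G) = \<Phi> ` carrier G \<times> \<Phi> ` carrier G"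
      by force
    then show "(\<lambda>(x, y). (\<Phi> x, \<Phi> y)) ` topspace (prod_topology T T) = topspace (prod_topology ?Q ?Q)"
      by (simp add: carrier)
  qed
  have mult: "continuous_map (prod_topology T T) ?Q
      ((\<lambda>p. fst p \<otimes>\<^bsub>H\<^esub> snd p) \<circ> (\<lambda>(x, y). (\<Phi> x, \<Phi> y)))"
  proof (rule continuous_map_eq)
    show "continuous_map (prod_topology T T) ?Q (\<Phi> \<circ> (\<lambda>p. fst p \<otimes>\<^bsub>G\<^esub> snd p))"
      using tg continuous_\<Phi> by (intro continuous_map_compose) (auto simp: topological_group_def)
  qed (auto simp: carrier)
  have inverse: "continuous_map T ?Q ((\<lambda>x. inv\<^bsub>H\<^esub> x) \<circ> \<Phi>)"
  proof (rule continuous_map_eq)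
    show "continuous_map T ?Q (\<Phi> \<circ> (\<lambda>x. inv\<^bsub>G\<^esub> x))"
      using tg continuous_\<Phi> by (intro continuous_map_compose) (auto simp: topological_group_def)
  qed (auto simp: carrier)
  show ?thesis
    using continuous_compose_quotient_map[OF pairs mult]
      continuous_compose_quotient_map[OF quotient_map_quotient_topology inverse]
      \<open>group H\<close> onto carrier
    by (simp add: topological_group_def)
qed

lemma topological_group_discrete_topology:
  fixes G :: "'g monoid" (structure)
  assumes "group G"
  shows "topological_group G (discrete_topology (carrier G))"
proof -
  interpret group G
    by (rule assms)
  have "continuous_map (discrete_topology (carrier G \<times> carrier G)) (discrete_topology (carrier G))
      (\<lambda>p. fst p \<otimes> snd p)"
    by auto
  then show ?thesis
    using assms by (auto simp: topological_group_def prod_topology_discrete_topology)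
qed

lemma in_variety_change_topology:
  "in_variety V G T \<Longrightarrow> topological_group G S \<Longrightarrow> in_variety V G S"
  by (simp add: in_variety_def)

section \<open>Transporting a topological group along an injection\<close>

definition transport_group :: "('g \<Rightarrow> 'h) \<Rightarrow> 'g monoid \<Rightarrow> 'h monoid" where
  "transport_group e G =
     \<lparr>carrier = e ` carrier G,
      monoid.mult = (\<lambda>a b. e (inv_into UNIV e a \<otimes>\<^bsub>G\<^esub> inv_into UNIV e b)),
      one = e \<one>\<^bsub>G\<^esub>\<rparr>"

definition transport_topology :: "('g \<Rightarrow> 'h) \<Rightarrow> 'g topology \<Rightarrow> 'h topology" where
  "transport_topology e T = pullback_topology (e ` topspace T) (inv_into UNIV e) T"

lemma transport_group_simps:
  "carrier (transport_group e G) = e ` carrier G"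
  "a \<otimes>\<^bsub>transport_group e G\<^esub> b = e (inv_into UNIV e a \<otimes>\<^bsub>G\<^esub> inv_into UNIV e b)"
  "\<one>\<^bsub>transport_group e G\<^esub> = e \<one>\<^bsub>G\<^esub>"
  by (simp_all add: transport_group_def)

lemma group_transport_group:
  fixes G :: "'g monoid" (structure)
  assumes "group G" and e: "inj e"
  shows "group (transport_group e G)"
    and "e \<in> hom G (transport_group e G)"
    and "inv_into UNIV e \<in> hom (transport_group e G) G"
proof -
  interpret group G
    by (rule assms)
  have inv_e [simp]: "inv_into UNIV e (e x) = x" for x
    using e by simp
  show "group (transport_group e G)"
  proof (rule groupI)
    fix x
    assume "x \<in> carrier (transport_group e G)"
    then obtain a where "a \<in> carrier G" "x = e a"
      by (auto simp: transport_group_simps)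
    then show "\<exists>y \<in> carrier (transport_group e G). y \<otimes>\<^bsub>transport_group e G\<^esub> x = \<one>\<^bsub>transport_group e G\<^esub>"
      by (intro bexI[of _ "e (inv a)"]) (simp_all add: transport_group_simps)
  qed (auto simp: transport_group_simps m_assoc)
  show "e \<in> hom G (transport_group e G)"
    by (rule homI) (simp_all add: transport_group_simps)
  show "inv_into UNIV e \<in> hom (transport_group e G) G"
    by (rule homI) (auto simp: transport_group_simps)
qed

lemma topological_group_transport:
  fixes G :: "'g monoid" (structure)
  assumes tg: "topological_group G T" and e: "inj e"
  shows "topological_group (transport_group e G) (transport_topology e T)"
    and "continuous_map T (transport_topology e T) e"
    and "continuous_map (transport_topology e T) T (inv_into UNIV e)"
proof -
  interpret group G
    using tg by (simp add: topological_group_def)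
  have carrier: "topspace T = carrier G"
    using tg by (simp add: topological_group_def)
  have inv_e [simp]: "inv_into UNIV e (e x) = x" for x
    using e by simp
  let ?G = "transport_group e G" and ?T = "transport_topology e T"
  interpret transported: group ?G
    by (rule group_transport_group[OF is_group e])
  have topspace: "topspace ?T = carrier ?G"
    by (auto simp: transport_topology_def topspace_pullback_topology transport_group_simps carrier)
  show inv_continuous: "continuous_map ?T T (inv_into UNIV e)"
    using continuous_map_pullback[OF continuous_map_id] by (simp add: transport_topology_def o_def)
  show e_continuous: "continuous_map T ?T e"
    unfolding transport_topology_def by (rule continuous_map_pullback') (auto simp: o_def)
  have "continuous_map (prod_topology ?T ?T) ?T
      (e \<circ> (\<lambda>p. fst p \<otimes> snd p) \<circ> (\<lambda>(x, y). (inv_into UNIV e x, inv_into UNIV e y)))"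
    using tg inv_continuous e_continuous
    by (intro continuous_map_compose) (auto simp: topological_group_def continuous_map_prod_top)
  then have "continuous_map (prod_topology ?T ?T) ?T (\<lambda>p. fst p \<otimes>\<^bsub>?G\<^esub> snd p)"
    by (rule continuous_map_eq) (auto simp: transport_group_simps)
  moreover have "continuous_map ?T ?T (e \<circ> (\<lambda>x. inv x) \<circ> inv_into UNIV e)"
    using tg inv_continuous e_continuous
    by (intro continuous_map_compose) (auto simp: topological_group_def)
  then have "continuous_map ?T ?T (\<lambda>x. inv\<^bsub>?G\<^esub> x)"
  proof (rule continuous_map_eq)
    fix x
    assume "x \<in> topspace ?T"
    then obtain a where "a \<in> carrier G" "x = e a"
      by (auto simp: topspace transport_group_simps)
    then show "(e \<circ> (\<lambda>x. inv x) \<circ> inv_into UNIV e) x = inv\<^bsub>?G\<^esub> x"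
      using group_hom.hom_inv[of G ?G e] group_transport_group[OF is_group e]
      by (simp add: group_hom_def group_hom_axioms_def is_group)
  qed
  ultimately show "topological_group ?G ?T"
    using transported.is_group topspace by (simp add: topological_group_def)
qed

lemma in_variety_transport:
  fixes G :: "'g monoid" (structure)
  assumes V: "in_variety V G T" and e: "inj e"
  shows "in_variety V (transport_group e G) (transport_topology e T)"
proof -
  have tg: "topological_group G T"
    using V by (simp add: in_variety_def)
  interpret group G
    using tg by (simp add: topological_group_def)
  let ?G = "transport_group e G"
  interpret transported: group ?G
    by (rule group_transport_group[OF is_group e])
  have "comm_group ?G" if "comm_group G"
  proof (rule transported.group_comm_groupI)
    fix x y
    assume "x \<in> carrier ?G" "y \<in> carrier ?G"
    then show "x \<otimes>\<^bsub>?G\<^esub> y = y \<otimes>\<^bsub>?G\<^esub> x"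
      using comm_groupE(4)[OF that] e by (auto simp: transport_group_simps)
  qed
  moreover have "\<forall>x\<in>carrier ?G. x \<otimes>\<^bsub>?G\<^esub> x = \<one>\<^bsub>?G\<^esub>"
    if "\<forall>x\<in>carrier G. x \<otimes> x = \<one>"
    using that e by (auto simp: transport_group_simps)
  ultimately show ?thesis
    using V topological_group_transport(1)[OF tg e] by (cases V) (simp_all add: in_variety_def)
qed

lemma inj_replicate_to_nat: "inj (\<lambda>x :: 'b :: countable. replicate (to_nat x) a)"
  by (rule injI) (metis length_replicate to_nat_split)

section \<open>Spaces with a single non-isolated point\<close>

definition t1_isolated_except :: "'a topology \<Rightarrow> 'a \<Rightarrow> bool" where
  "t1_isolated_except Y p \<longleftrightarrow>
     p \<in> topspace Y \<and> t1_space Y \<and> (\<forall>W. W \<subseteq> topspace Y \<and> p \<notin> W \<longrightarrow> openin Y W)"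

lemma t1_isolated_except_imp_Hausdorff_space:
  assumes Y: "t1_isolated_except Y p"
  shows "Hausdorff_space Y"
  unfolding Hausdorff_space_def
proof (intro allI impI)
  have open_avoiding: "\<And>W. W \<subseteq> topspace Y \<Longrightarrow> p \<notin> W \<Longrightarrow> openin Y W"
    and closed_singleton: "\<And>y. y \<in> topspace Y \<Longrightarrow> closedin Y {y}"
    using Y by (simp_all add: t1_isolated_except_def closedin_t1_singleton)
  fix x y
  assume xy: "x \<in> topspace Y \<and> y \<in> topspace Y \<and> x \<noteq> y"
  then consider "x \<noteq> p" | "y \<noteq> p"
    by blast
  then show "\<exists>U V. openin Y U \<and> openin Y V \<and> x \<in> U \<and> y \<in> V \<and> disjnt U V"
  proof cases
    case 1
    then show ?thesis
      using xy open_avoiding[of "{x}"] closed_singleton[of x]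
      by (intro exI[of _ "{x}"] exI[of _ "topspace Y - {x}"]) (auto simp: disjnt_def closedin_def)
  next
    case 2
    then show ?thesis
      using xy open_avoiding[of "{y}"] closed_singleton[of y]
      by (intro exI[of _ "topspace Y - {y}"] exI[of _ "{y}"]) (auto simp: disjnt_def closedin_def)
  qed
qed

lemma t1_isolated_except_imp_zero_dimensional:
  assumes Y: "t1_isolated_except Y p"
  shows "Y dim_le 0"
  unfolding dimension_le_0_neighbourhood_base_of_clopen neighbourhood_base_of
proof (intro allI impI)
  have open_avoiding: "\<And>W. W \<subseteq> topspace Y \<Longrightarrow> p \<notin> W \<Longrightarrow> openin Y W"
    and closed_singleton: "\<And>y. y \<in> topspace Y \<Longrightarrow> closedin Y {y}"
    using Y by (simp_all add: t1_isolated_except_def closedin_t1_singleton)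
  fix W y
  assume W: "openin Y W \<and> y \<in> W"
  show "\<exists>U V. openin Y U \<and> (closedin Y V \<and> openin Y V) \<and> y \<in> U \<and> U \<subseteq> V \<and> V \<subseteq> W"
  proof (cases "y = p")
    case True
    then have "closedin Y W"
      using W open_avoiding[of "topspace Y - W"] by (simp add: closedin_def openin_subset)
    then show ?thesis
      using W by blast
  next
    case False
    then show ?thesis
      using W open_avoiding[of "{y}"] closed_singleton[of y] openin_subset[of Y W]
      by (intro exI[of _ "{y}"]) auto
  qed
qed

lemma t1_isolated_except_imp_tychonoff_space:
  "t1_isolated_except Y p \<Longrightarrow> tychonoff_space Y"
  by (simp add: tychonoff_space_def t1_isolated_except_imp_Hausdorff_space
      zero_dimensional_imp_completely_regular_space t1_isolated_except_imp_zero_dimensional)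

lemma continuous_map_discrete_if_cofinitely_constant:
  assumes Y: "t1_isolated_except Y p" and F: "finite F"
    and f: "f ` topspace Y \<subseteq> D" and off_F: "\<And>y. y \<in> topspace Y - F \<Longrightarrow> f y = f p"
  shows "continuous_map Y (discrete_topology D) f"
  unfolding continuous_map_def
proof (intro conjI allI impI)
  show "f \<in> topspace Y \<rightarrow> topspace (discrete_topology D)"
    using f by auto
  fix A
  show "openin Y {y \<in> topspace Y. f y \<in> A}"
  proof (cases "f p \<in> A")
    case True
    then have "{y \<in> topspace Y. f y \<notin> A} \<subseteq> F"
      using off_F by force
    then have "closedin Y {y \<in> topspace Y. f y \<notin> A}"
      using Y F by (simp add: t1_isolated_except_def t1_space_closedin_finite finite_subset)
    moreover have "{y \<in> topspace Y. f y \<in> A} = topspace Y - {y \<in> topspace Y. f y \<notin> A}"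
      by blast
    ultimately show ?thesis
      by (simp add: openin_diff)
  next
    case False
    then show ?thesis
      using Y by (simp add: t1_isolated_except_def)
  qed
qed

section \<open>Graev free topological groups\<close>

lemma (in group) hom_fixes_generate:
  assumes h: "h \<in> hom G G" and S: "S \<subseteq> carrier G" and fixes_S: "\<And>s. s \<in> S \<Longrightarrow> h s = s"
    and w: "w \<in> generate G S"
  shows "h w = w"
proof -
  interpret group_hom G G h
    using h by (simp add: group_hom_def group_hom_axioms_def is_group)
  show ?thesis
    using w
  proof (induction rule: generate.induct)
    case (incl s)
    then show ?case
      by (rule fixes_S)
  next
    case (inv s)
    then show ?case
      using S fixes_S by auto
  next
    case (eng a b)
    then show ?case
      using generate_in_carrier[OF S] by simp
  qed simp
qed

lemma (in group) generate_finite_subset: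
  assumes "w \<in> generate G S"
  shows "\<exists>F. finite F \<and> F \<subseteq> S \<and> w \<in> generate G F"
  using assms
proof (induction rule: generate.induct)
  case one
  then show ?case
    using generate.one by blast
next
  case (incl s)
  then show ?case
    using generate.incl[of s "{s}"] by blast
next
  case (inv s)
  then show ?case
    using generate.inv[of s "{s}"] by blast
next
  case (eng a b)
  then obtain F1 F2 where "finite F1" "F1 \<subseteq> S" "a \<in> generate G F1"
    and "finite F2" "F2 \<subseteq> S" "b \<in> generate G F2"
    by blast
  moreover have "generate G F1 \<subseteq> generate G (F1 \<union> F2)" "generate G F2 \<subseteq> generate G (F1 \<union> F2)"
    by (simp_all add: mono_generate)
  ultimately show ?case
    by (intro exI[of _ "F1 \<union> F2"]) (auto intro: generate.eng)
qed

lemma (in group_hom) image_eq_carrier_if_generators: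
  assumes "generate H S = carrier H" and "S \<subseteq> h ` carrier G"
  shows "h ` carrier G = carrier H"
  using H.generate_subgroup_incl[OF assms(2) img_is_subgroup] assms(1) by auto

lemma graev_free_in_variety: "graev_free V X x0 G T i \<Longrightarrow> in_variety V G T"
  by (simp add: graev_free_def)

lemma graev_free_basepoint:
  assumes "graev_free V X x0 G T i"
  shows "x0 \<in> topspace X" and "i x0 = \<one>\<^bsub>G\<^esub>"
  using assms by (simp_all add: graev_free_def)

lemma graev_free_generate: "graev_free V X x0 G T i \<Longrightarrow> generate G (i ` topspace X) = carrier G"
  by (simp add: graev_free_def)

lemma graev_free_topological_group: "graev_free V X x0 G T i \<Longrightarrow> topological_group G T"
  by (simp add: graev_free_def in_variety_def)

lemma graev_free_continuous_map: "graev_free V X x0 G T i \<Longrightarrow> continuous_map X T i"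
  unfolding graev_free_def embedding_map_def
  by (meson continuous_map_in_subtopology homeomorphic_imp_continuous_map)

lemma graev_free_image_subset_carrier: "graev_free V X x0 G T i \<Longrightarrow> i ` topspace X \<subseteq> carrier G"
  using continuous_map_image_subset_topspace[OF graev_free_continuous_map] graev_free_topological_group
  by (fastforce simp: topological_group_def)

lemma graev_free_extension:
  fixes X :: "'a topology" and H :: "'a list monoid"
  assumes "graev_free V X x0 G T i" and "in_variety V H S"
    and "continuous_map X S f" and "f x0 = \<one>\<^bsub>H\<^esub>"
  obtains h where "h \<in> hom G H" "continuous_map T S h" "\<And>x. x \<in> topspace X \<Longrightarrow> h (i x) = f x"
  using assms unfolding graev_free_def by blast

text \<open>The universal property in \<open>graev_free\<close> only covers groups carried by \<open>'a list\<close>;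
  transport extends it to groups carried by any type that injects into \<open>'a list\<close>.\<close>

lemma graev_free_extension_inj:
  fixes X :: "'a topology" and H :: "'h monoid" and e :: "'h \<Rightarrow> 'a list"
  assumes gf: "graev_free V X x0 G T i" and e: "inj e" and H: "in_variety V H S"
    and f: "continuous_map X S f" "f x0 = \<one>\<^bsub>H\<^esub>"
  obtains h where "h \<in> hom G H" "continuous_map T S h" "\<And>x. x \<in> topspace X \<Longrightarrow> h (i x) = f x"
proof -
  have tg: "topological_group H S"
    using H by (simp add: in_variety_def)
  note transport = in_variety_transport[OF H e] topological_group_transport(2,3)[OF tg e]
  have "group H"
    using tg by (simp add: topological_group_def)
  have "continuous_map X (transport_topology e S) (e \<circ> f)"
    by (rule continuous_map_compose[OF f(1) transport(2)])
  moreover have "(e \<circ> f) x0 = \<one>\<^bsub>transport_group e H\<^esub>"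
    using f(2) by (simp add: transport_group_simps)
  ultimately obtain h where h: "h \<in> hom G (transport_group e H)"
      "continuous_map T (transport_topology e S) h" "\<And>x. x \<in> topspace X \<Longrightarrow> h (i x) = (e \<circ> f) x"
    using graev_free_extension[OF gf transport(1)] by blast
  show thesis
  proof (rule that)
    show "inv_into UNIV e \<circ> h \<in> hom G H"
      by (rule hom_compose[OF h(1) group_transport_group(3)[OF \<open>group H\<close> e]])
    show "continuous_map T S (inv_into UNIV e \<circ> h)"
      by (rule continuous_map_compose[OF h(2) transport(3)])
    show "(inv_into UNIV e \<circ> h) (i x) = f x" if "x \<in> topspace X" for x
      using h(3)[OF that] e by simp
  qed
qed

lemma graev_free_finest_topology:
  fixes Y :: "'b topology" and G :: "'b list monoid"
  assumes gf: "graev_free V Y y0 G T i" and S: "topological_group G S" and i: "continuous_map Y S i"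
  shows "continuous_map T S id"
proof -
  interpret group G
    using S by (simp add: topological_group_def)
  obtain h where h: "h \<in> hom G G" "continuous_map T S h" "\<And>y. y \<in> topspace Y \<Longrightarrow> h (i y) = i y"
    using graev_free_extension[OF gf in_variety_change_topology[OF graev_free_in_variety[OF gf] S] i
        graev_free_basepoint(2)[OF gf]]
    by blast
  have "h w = w" if "w \<in> carrier G" for w
    using hom_fixes_generate[OF h(1) graev_free_image_subset_carrier[OF gf]] h(3) that
      graev_free_generate[OF gf]
    by auto
  then show ?thesis
    using continuous_map_eq[OF h(2)] graev_free_topological_group[OF gf]
    by (simp add: topological_group_def)
qed

text \<open>The word \<open>w\<close> involves finitely many points of \<open>Y\<close>; sending these to themselves and all
  other points to \<open>i p\<close> is continuous into the discrete group, and its extension fixes \<open>w\<close>.\<close>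

lemma graev_free_discrete_hom_fixing:
  fixes Y :: "'b topology" and G :: "'b list monoid" (structure)
  assumes gf: "graev_free V Y y0 G T i" and Y: "t1_isolated_except Y p" and w: "w \<in> carrier G"
  obtains h where "h \<in> hom G G" "continuous_map T (discrete_topology (carrier G)) h" "h w = w"
proof -
  interpret group G
    using graev_free_topological_group[OF gf] by (simp add: topological_group_def)
  have i: "i ` topspace Y \<subseteq> carrier G"
    by (rule graev_free_image_subset_carrier[OF gf])
  have "w \<in> generate G (i ` topspace Y)"
    using w graev_free_generate[OF gf] by simp
  then obtain F' where "finite F'" "F' \<subseteq> i ` topspace Y" "w \<in> generate G F'"
    using generate_finite_subset by blast
  then obtain F where F: "finite F" "F \<subseteq> topspace Y" "w \<in> generate G (i ` F)"
    by (metis finite_subset_image)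
  define f where "f y = (if y \<in> insert y0 F then i y else i p)" for y
  have "continuous_map Y (discrete_topology (carrier G)) f"
    using Y F i unfolding f_def
    by (intro continuous_map_discrete_if_cofinitely_constant[OF Y, of "insert y0 F"])
      (auto simp: t1_isolated_except_def)
  moreover have "f y0 = \<one>"
    using graev_free_basepoint(2)[OF gf] by (simp add: f_def)
  moreover have "in_variety V G (discrete_topology (carrier G))"
    using in_variety_change_topology[OF graev_free_in_variety[OF gf]]
      topological_group_discrete_topology[OF is_group] .
  ultimately obtain h where h: "h \<in> hom G G" "continuous_map T (discrete_topology (carrier G)) h"
    "\<And>y. y \<in> topspace Y \<Longrightarrow> h (i y) = f y"
    using graev_free_extension[OF gf] by metis
  have "h w = w"
  proof (rule hom_fixes_generate[OF h(1) _ _ F(3)])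
    show "i ` F \<subseteq> carrier G"
      using F(2) i by blast
    show "h s = s" if "s \<in> i ` F" for s
      using that F(2) h(3) by (auto simp: f_def)
  qed
  with h(1,2) show thesis
    by (rule that)
qed

lemma graev_free_closedin_one:
  fixes Y :: "'b topology" and G :: "'b list monoid" (structure)
  assumes gf: "graev_free V Y y0 G T i" and Y: "t1_isolated_except Y p"
  shows "closedin T {\<one>}"
proof -
  have tg: "topological_group G T"
    by (rule graev_free_topological_group[OF gf])
  interpret group G
    using tg by (simp add: topological_group_def)
  have carrier: "topspace T = carrier G"
    using tg by (simp add: topological_group_def)
  have "\<exists>W. openin T W \<and> w \<in> W \<and> W \<subseteq> topspace T - {\<one>}" if w: "w \<in> topspace T - {\<one>}" for w
  proof -
    obtain h where h: "h \<in> hom G G" "continuous_map T (discrete_topology (carrier G)) h" "h w = w"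
      using graev_free_discrete_hom_fixing[OF gf Y] w carrier by blast
    have "openin T {x \<in> topspace T. h x \<in> carrier G - {\<one>}}"
      using h(2) by (rule openin_continuous_map_preimage) simp
    moreover have "h \<one> = \<one>"
      using h(1) by (simp add: group_hom.hom_one group_hom_def group_hom_axioms_def is_group)
    ultimately show ?thesis
      using w h(3) carrier by (intro exI[of _ "{x \<in> topspace T. h x \<in> carrier G - {\<one>}}"]) auto
  qed
  then have "openin T (topspace T - {\<one>})"
    using openin_subopen by blast
  then show ?thesis
    using carrier by (simp add: closedin_def)
qed

text \<open>The universal property only extends maps sending \<open>x\<^sub>0\<close> to the identity, so we extend
  \<open>x \<mapsto> q x \<cdot> (q x\<^sub>0)\<^sup>-\<^sup>1\<close> and undo the normalisation by translating with \<open>a = (i x\<^sub>1)\<^sup>-\<^sup>1\<close>,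
  where \<open>q x\<^sub>1 = y\<^sub>0\<close>.\<close>

lemma graev_free_induced_hom:
  fixes X :: "'a topology" and Y :: "'b topology" and e :: "'b list \<Rightarrow> 'a list"
    and GX :: "'a list monoid" and GY :: "'b list monoid"
  assumes q: "continuous_map X Y q" and q_onto: "q ` topspace X = topspace Y" and e: "inj e"
    and gX: "graev_free V X x0 GX TX iX" and gY: "graev_free V Y y0 GY TY iY"
  obtains \<Phi> a where "\<Phi> \<in> hom GX GY" "continuous_map TX TY \<Phi>" "a \<in> carrier GX"
    "\<And>x. x \<in> topspace X \<Longrightarrow> \<Phi> (iX x \<otimes>\<^bsub>GX\<^esub> a) = iY (q x)"
proof -
  have tgX: "topological_group GX TX" and tgY: "topological_group GY TY"
    using gX gY by (simp_all add: graev_free_topological_group)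
  interpret GX: group GX
    using tgX by (simp add: topological_group_def)
  interpret GY: group GY
    using tgY by (simp add: topological_group_def)
  have iX: "iX ` topspace X \<subseteq> carrier GX" and iY: "iY ` topspace Y \<subseteq> carrier GY"
    using gX gY by (simp_all add: graev_free_image_subset_carrier)
  have q_maps: "q ` topspace X \<subseteq> topspace Y"
    using q_onto by simp
  have "y0 \<in> q ` topspace X"
    using graev_free_basepoint(1)[OF gY] q_onto by simp
  then obtain x1 where x1: "x1 \<in> topspace X" "q x1 = y0"
    by blast
  define c where "c = inv\<^bsub>GY\<^esub> iY (q x0)"
  have "iY (q x0) \<in> carrier GY"
    using graev_free_basepoint(1)[OF gX] q_maps iY by blast
  then have c: "c \<in> carrier GY" and one: "iY (q x0) \<otimes>\<^bsub>GY\<^esub> c = \<one>\<^bsub>GY\<^esub>"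
    by (simp_all add: c_def)
  have cont: "continuous_map X TY (\<lambda>x. iY (q x) \<otimes>\<^bsub>GY\<^esub> c)"
    using continuous_map_compose[OF continuous_map_compose[OF q graev_free_continuous_map[OF gY]]
        topological_group_right_translation[OF tgY c]]
    by (simp add: o_def)
  obtain \<Phi> where \<Phi>: "\<Phi> \<in> hom GX GY" "continuous_map TX TY \<Phi>"
    and \<Phi>_iX: "\<And>x. x \<in> topspace X \<Longrightarrow> \<Phi> (iX x) = iY (q x) \<otimes>\<^bsub>GY\<^esub> c"
    using graev_free_extension_inj[OF gX e graev_free_in_variety[OF gY] cont one] by blast
  interpret group_hom GX GY \<Phi>
    using \<Phi>(1) by (simp add: group_hom_def group_hom_axioms_def GX.is_group GY.is_group)
  have \<Phi>_x1: "\<Phi> (iX x1) = c"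
    using \<Phi>_iX[OF x1(1)] x1(2) graev_free_basepoint(2)[OF gY] c by simp
  show thesis
  proof (rule that[OF \<Phi>])
    show "inv\<^bsub>GX\<^esub> iX x1 \<in> carrier GX"
      using x1(1) iX by blast
    show "\<Phi> (iX x \<otimes>\<^bsub>GX\<^esub> inv\<^bsub>GX\<^esub> iX x1) = iY (q x)" if "x \<in> topspace X" for x
    proof -
      have "iX x \<in> carrier GX" "iX x1 \<in> carrier GX" "iY (q x) \<in> carrier GY"
        using that x1(1) iX iY q_maps by blast+
      then show ?thesis
        using c by (simp add: \<Phi>_iX[OF that] \<Phi>_x1 GY.m_assoc)
    qed
  qed
qed

lemma graev_free_quotient_hom:
  fixes X :: "'a topology" and Y :: "'b topology" and e :: "'b list \<Rightarrow> 'a list"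
    and GX :: "'a list monoid" and GY :: "'b list monoid"
  assumes q: "quotient_map X Y q" and e: "inj e"
    and gX: "graev_free V X x0 GX TX iX" and gY: "graev_free V Y y0 GY TY iY"
  obtains \<Phi> where "\<Phi> \<in> hom GX GY" "\<Phi> ` carrier GX = carrier GY" "TY = quotient_topology TX \<Phi>"
proof -
  have q_onto: "q ` topspace X = topspace Y"
    by (rule quotient_imp_surjective_map[OF q])
  obtain \<Phi> a where \<Phi>: "\<Phi> \<in> hom GX GY" "continuous_map TX TY \<Phi>" and a: "a \<in> carrier GX"
    and \<Phi>_iX: "\<And>x. x \<in> topspace X \<Longrightarrow> \<Phi> (iX x \<otimes>\<^bsub>GX\<^esub> a) = iY (q x)"
    using graev_free_induced_hom[OF quotient_imp_continuous_map[OF q] q_onto e gX gY] by blast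
  have tgX: "topological_group GX TX"
    by (rule graev_free_topological_group[OF gX])
  interpret GX: group GX
    using tgX by (simp add: topological_group_def)
  interpret group_hom GX GY \<Phi>
    using \<Phi>(1) graev_free_topological_group[OF gY]
    by (simp add: group_hom_def group_hom_axioms_def GX.is_group topological_group_def)
  have iX: "iX ` topspace X \<subseteq> carrier GX"
    by (rule graev_free_image_subset_carrier[OF gX])
  have onto: "\<Phi> ` carrier GX = carrier GY"
  proof (rule image_eq_carrier_if_generators[OF graev_free_generate[OF gY]])
    show "iY ` topspace Y \<subseteq> \<Phi> ` carrier GX"
    proof
      fix z
      assume "z \<in> iY ` topspace Y"
      then obtain x where x: "x \<in> topspace X" "z = iY (q x)"
        by (metis imageE q_onto)
      have "z = \<Phi> (iX x \<otimes>\<^bsub>GX\<^esub> a)"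
        using \<Phi>_iX[OF x(1)] x(2) by simp
      moreover have "iX x \<otimes>\<^bsub>GX\<^esub> a \<in> carrier GX"
        using x(1) iX a by blast
      ultimately show "z \<in> \<Phi> ` carrier GX"
        by (rule image_eqI)
    qed
  qed
  let ?\<tau> = "quotient_topology TX \<Phi>"
  have "continuous_map X ?\<tau> (\<Phi> \<circ> ((\<lambda>z. z \<otimes>\<^bsub>GX\<^esub> a) \<circ> iX))"
    using a by (intro continuous_map_compose[OF continuous_map_compose[OF graev_free_continuous_map[OF gX]
        topological_group_right_translation[OF tgX]] quotient_imp_continuous_map[OF quotient_map_quotient_topology]])
  then have "continuous_map X ?\<tau> (iY \<circ> q)"
    by (rule continuous_map_eq) (simp add: \<Phi>_iX)
  then have "continuous_map Y ?\<tau> iY"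
    by (rule continuous_compose_quotient_map[OF q])
  then have "continuous_map TY ?\<tau> id"
    by (rule graev_free_finest_topology[OF gY topological_group_quotient_topology[OF tgX H.is_group \<Phi>(1) onto]])
  moreover have "continuous_map ?\<tau> TY id"
    using \<Phi>(2) by (intro continuous_compose_quotient_map[OF quotient_map_quotient_topology]) simp
  ultimately have "TY = ?\<tau>"
    using homeomorphic_maps_id[of ?\<tau> TY] by (simp add: homeomorphic_maps_def)
  with \<Phi>(1) onto show thesis
    by (rule that)
qed

lemma topological_quotient_if_quotient_hom:
  assumes "group G" "group H" and \<Phi>: "\<Phi> \<in> hom G H" "\<Phi> ` carrier G = carrier H"
    and carrier: "topspace T = carrier G" and q: "quotient_map T S \<Phi>"
    and one: "closedin S {\<one>\<^bsub>H\<^esub>}"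
  shows "topological_quotient G T H S"
proof -
  interpret group_hom G H \<Phi>
    using assms by (simp add: group_hom_def group_hom_axioms_def)
  have "kernel G H \<Phi> = {x \<in> topspace T. \<Phi> x \<in> {\<one>\<^bsub>H\<^esub>}}"
    using carrier by (auto simp: kernel_def)
  then have closed: "closedin T (kernel G H \<Phi>)"
    using closedin_continuous_map_preimage[OF quotient_imp_continuous_map[OF q] one] by simp
  have "the_elem (\<Phi> ` (kernel G H \<Phi> #>\<^bsub>G\<^esub> x)) = \<Phi> x" if x: "x \<in> carrier G" for x
  proof -
    have "\<Phi> ` (kernel G H \<Phi> #>\<^bsub>G\<^esub> x) \<subseteq> {\<Phi> x}"
      using x by (auto simp: kernel_def r_coset_def)
    moreover have "x \<in> kernel G H \<Phi> #>\<^bsub>G\<^esub> x"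
      by (rule G.rcos_self[OF x subgroup_kernel])
    ultimately have "\<Phi> ` (kernel G H \<Phi> #>\<^bsub>G\<^esub> x) = {\<Phi> x}"
      by blast
    then show ?thesis
      by simp
  qed
  then have quotient: "quotient_map T S (\<lambda>x. the_elem (\<Phi> ` (kernel G H \<Phi> #>\<^bsub>G\<^esub> x)))"
    by (intro quotient_map_eq[OF q]) (simp add: carrier)
  show ?thesis
    unfolding topological_quotient_def
  proof (intro exI conjI)
    show "kernel G H \<Phi> \<lhd> G"
      by (rule normal_kernel)
    show "(\<lambda>A. the_elem (\<Phi> ` A)) \<in> iso (G Mod kernel G H \<Phi>) H"
      by (rule FactGroup_iso_set[OF \<Phi>(2)])
  qed (fact closed quotient)+
qed

section \<open>Collapsing a sequence of clopen sets\<close>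

definition nest_index :: "(nat \<Rightarrow> 'a set) \<Rightarrow> 'a \<Rightarrow> nat" where
  "nest_index U x = (if x \<in> (\<Inter>n. U n) then 0 else Suc (LEAST n. x \<notin> U n))"

lemma nest_index_eq_0_iff: "nest_index U x = 0 \<longleftrightarrow> x \<in> (\<Inter>n. U n)"
  by (simp add: nest_index_def)

lemma nest_index_eq_Suc_iff: "nest_index U x = Suc k \<longleftrightarrow> x \<in> (\<Inter>m<k. U m) - U k"
proof (cases "x \<in> (\<Inter>n. U n)")
  case False
  then have "\<exists>n. x \<notin> U n"
    by blast
  then have "(LEAST n. x \<notin> U n) = k \<longleftrightarrow> x \<notin> U k \<and> (\<forall>m<k. x \<in> U m)"
  proof (intro iffI conjI allI impI)
    show "x \<notin> U k" if "(LEAST n. x \<notin> U n) = k"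
      using LeastI_ex[OF \<open>\<exists>n. x \<notin> U n\<close>] that by simp
    show "x \<in> U m" if "(LEAST n. x \<notin> U n) = k" "m < k" for m
      using not_less_Least[of m "\<lambda>n. x \<notin> U n"] that by simp
    show "(LEAST n. x \<notin> U n) = k" if "x \<notin> U k \<and> (\<forall>m<k. x \<in> U m)"
      using that by (intro Least_equality) (auto simp flip: not_less)
  qed
  then show ?thesis
    using False by (auto simp: nest_index_def)
qed (auto simp: nest_index_def)

lemma nest_index_fibres:
  assumes clopen: "\<And>n. openin X (U n) \<and> closedin X (U n)"
  shows "closedin X {x \<in> topspace X. nest_index U x = k}"
    and "openin X {x \<in> topspace X. nest_index U x = Suc k}"
proof -
  have U_topspace: "U n \<subseteq> topspace X" for n
    using clopen openin_subset by blast
  have fibre_Suc: "{x \<in> topspace X. nest_index U x = Suc k} = \<Inter>(insert (topspace X) (U ` {..<k})) - U k"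
    for k
    by (auto simp: nest_index_eq_Suc_iff)
  show "closedin X {x \<in> topspace X. nest_index U x = k}"
  proof (cases k)
    case 0
    have "{x \<in> topspace X. nest_index U x = 0} = (\<Inter>n. U n)"
      using U_topspace by (auto simp: nest_index_eq_0_iff)
    then show ?thesis
      using 0 clopen by auto
  next
    case (Suc m)
    show ?thesis
      unfolding Suc fibre_Suc using clopen by (intro closedin_diff closedin_Inter) auto
  qed
  show "openin X {x \<in> topspace X. nest_index U x = Suc k}"
    unfolding fibre_Suc using clopen by (intro openin_diff openin_Inter) auto
qed

lemma t1_isolated_except_quotient_nest_index:
  assumes clopen: "\<And>n. openin X (U n) \<and> closedin X (U n)" and nonempty: "(\<Inter>n. U n) \<noteq> {}"
  shows "t1_isolated_except (quotient_topology X (nest_index U)) 0"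
  unfolding t1_isolated_except_def
proof (intro conjI allI impI)
  obtain x where "x \<in> (\<Inter>n. U n)"
    using nonempty by blast
  moreover have "x \<in> topspace X"
    using calculation clopen openin_subset by blast
  ultimately show "0 \<in> topspace (quotient_topology X (nest_index U))"
    by (force simp: nest_index_eq_0_iff)
  show "t1_space (quotient_topology X (nest_index U))"
    by (rule t1_space_quotient_topology) (rule nest_index_fibres(1)[OF clopen])
  fix W
  assume "W \<subseteq> topspace (quotient_topology X (nest_index U)) \<and> 0 \<notin> W"
  then have W: "W \<subseteq> nest_index U ` topspace X" "0 \<notin> W"
    by simp_all
  show "openin (quotient_topology X (nest_index U)) W"
  proof (rule openin_quotient_topology_fibres[OF W(1)])
    show "openin X {x \<in> topspace X. nest_index U x = y}" if "y \<in> W" for y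
    proof -
      have "y \<noteq> 0"
        using that W(2) by metis
      then obtain k where "y = Suc k"
        using not0_implies_Suc by blast
      then show ?thesis
        using nest_index_fibres(2)[OF clopen] by simp
    qed
  qed
qed

theorem proposition1:
  fixes X :: "'a topology" and U :: "nat \<Rightarrow> 'a set"
  assumes "tychonoff_space X"
    and "\<And>n. openin X (U n) \<and> closedin X (U n)"
    and "\<And>n. U (Suc n) \<subseteq> U n"
    and "(\<Inter>n. U n) \<noteq> {}"
    and "\<not> openin X (\<Inter>n. U n)"
  shows "\<exists>Y :: nat topology.
           tychonoff_space Y \<and> countable (topspace Y) \<and>
           (\<exists>y\<in>topspace Y. \<not> openin Y {y}) \<and>
           (\<forall>V \<in> {AllGroups, AbelianGroups, BooleanGroups}.
              \<forall>x0 y0 (GX :: 'a list monoid) TX iX (GY :: nat list monoid) TY iY.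
                graev_free V X x0 GX TX iX \<and> graev_free V Y y0 GY TY iY \<longrightarrow>
                topological_quotient GX TX GY TY)"
proof -
  define Y where "Y = quotient_topology X (nest_index U)"
  have Y: "t1_isolated_except Y 0"
    unfolding Y_def using assms(2,4) by (rule t1_isolated_except_quotient_nest_index)
  have "{x \<in> topspace X. nest_index U x \<in> {0}} = (\<Inter>n. U n)"
    using assms(2) openin_subset by (fastforce simp: nest_index_eq_0_iff)
  then have "\<not> openin Y {0}"
    using assms(5) by (simp add: Y_def openin_quotient_topology)
  moreover have "topological_quotient GX TX GY TY"
    if gX: "graev_free V X x0 GX TX iX" and gY: "graev_free V Y y0 GY TY iY"
    for V x0 y0 and GX :: "'a list monoid" and TX iX and GY :: "nat list monoid" and TY iY
  proof -
    obtain \<Phi> where \<Phi>: "\<Phi> \<in> hom GX GY" "\<Phi> ` carrier GX = carrier GY" "TY = quotient_topology TX \<Phi>"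
      using graev_free_quotient_hom[OF quotient_map_quotient_topology inj_replicate_to_nat gX gY[unfolded Y_def]]
      by blast
    then show ?thesis
      using graev_free_topological_group[OF gX] graev_free_topological_group[OF gY]
        graev_free_closedin_one[OF gY Y] quotient_map_quotient_topology
      by (intro topological_quotient_if_quotient_hom) (auto simp: topological_group_def)
  qed
  ultimately show ?thesis
    using Y t1_isolated_except_imp_tychonoff_space[OF Y]
    by (intro exI[of _ Y]) (auto simp: t1_isolated_except_def countableI_type)
qed

end
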